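(* Let $A\in\mathrm{GL}_0(\mathcal S)$ with $A\circ A=\mathrm{id}$ and $A\notin\mathrm{Inv}(\mathcal S)$. Then the roots of $F$ can be numbered so that $A(\mathfrak p_3)=\mathfrak p_4$ and $A(\mathfrak p_5)=\mathfrak p_6$. Suppose the roots are so numbered and that moreover $\theta_3+\theta_4=\theta_5+\theta_6$ or $\theta_3\theta_4=\theta_5\theta_6$ (which can always be achieved by a translation $X\mapsto X+t$). Then: (a) if $A(\mathfrak p_1)=\mathfrak p_2$, then $\theta_1+\theta_2=\theta_3+\theta_4=\theta_5+\theta_6$ or $\theta_1\theta_2=\theta_3\theta_4=\theta_5\theta_6$; (b) otherwise $A$ fixes $\mathfrak p_1$ and $\mathfrak p_2$, and $\theta_1+\theta_2=0$ and $\theta_1^2=\theta_2^2=\theta_3\theta_4=\theta_5\theta_6$.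
   Context: Work over an algebraically closed field of characteristic $\neq2$. $F(X)=\sum_{i=0}^6f_iX^i$, $f_6\neq0$, distinct roots $\theta_1,\dots,\theta_6$. $P_j(X)=\prod_{i\ne j}(X-\theta_i)$, $\omega_j=P_j(\theta_j)$. Points of $\mathbb P^5$ are identified with $P(X)=\sum_{j=0}^5p_jX^j$; $\pi_j=P(\theta_j)/\omega_j$. $\mathcal S\subset\mathbb P^5$ is defined by $\sum_j\theta_j^i\omega_j\pi_j^2=0$, $i=0,1,2$. $\varepsilon^{(i)}$ is the involution $\pi_j\mapsto(-1)^{\delta_{ij}}\pi_j$ of $\mathcal S$; $\mathrm{Inv}(\mathcal S)$ is the commutative group of order 32 generated by them. $\Delta_0=\{(p_0:p_1:0:0:0:0)\}\subset\mathcal S$ and $\mathfrak p_i=(-\theta_i:1:0:0:0:0)\in\Delta_0$. $\mathrm{GL}(\mathcal S)$ is the group of automorphisms of $\mathcal S$ which are restrictions of projective linear transformations of $\mathbb P^5$, $\mathrm{GL}_0(\mathcal S)=\{A\in\mathrm{GL}(\mathcal S):A(\Delta_0)=\Delta_0\}$; each $A\in\mathrm{GL}_0(\mathcal S)$ permutes the set $\{\mathfrak p_1,\dots,\mathfrak p_6\}$. *)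

theory Defs
  imports "HOL-Computational_Algebra.Polynomial" "HOL-Combinatorics.Permutations"
begin

text \<open>Points of P^5 are represented by
  nonzero coefficient vectors p :: nat => 'a supported on {0..5}, taken up to a
  nonzero scalar; p corresponds to P(X) = sum_{k<6} p_k X^k.\<close>

definition Pj :: "(nat \<Rightarrow> 'a::field) \<Rightarrow> nat \<Rightarrow> 'a poly" where
  "Pj \<theta> j = (\<Prod>i\<in>{1..6} - {j}. [:- \<theta> i, 1:])"

definition omega :: "(nat \<Rightarrow> 'a::field) \<Rightarrow> nat \<Rightarrow> 'a" where
  "omega \<theta> j = poly (Pj \<theta> j) (\<theta> j)"

definition vec6 :: "(nat \<Rightarrow> 'a::field) set" where
  "vec6 = {p. \<forall>k\<ge>6. p k = 0}"

definition Ppoly :: "(nat \<Rightarrow> 'a::field) \<Rightarrow> 'a poly" where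
  "Ppoly p = (\<Sum>k<6. monom (p k) k)"

definition piC :: "(nat \<Rightarrow> 'a::field) \<Rightarrow> nat \<Rightarrow> (nat \<Rightarrow> 'a) \<Rightarrow> 'a" where
  "piC \<theta> j p = poly (Ppoly p) (\<theta> j) / omega \<theta> j"

definition Scone :: "(nat \<Rightarrow> 'a::field) \<Rightarrow> (nat \<Rightarrow> 'a) set" where
  "Scone \<theta> = {p \<in> vec6. p \<noteq> (\<lambda>_. 0) \<and>
     (\<forall>i<(3::nat). (\<Sum>j\<in>{1..6}. \<theta> j ^ i * omega \<theta> j * (piC \<theta> j p)\<^sup>2) = 0)}"

definition Delta0 :: "(nat \<Rightarrow> 'a::field) set" where
  "Delta0 = {p \<in> vec6. \<forall>k\<ge>2. p k = 0}"

definition ppt :: "(nat \<Rightarrow> 'a::field) \<Rightarrow> nat \<Rightarrow> nat \<Rightarrow> 'a" where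
  "ppt \<theta> i = (\<lambda>k. if k = 0 then - \<theta> i else if k = 1 then 1 else 0)"

definition peq :: "(nat \<Rightarrow> 'a::field) \<Rightarrow> (nat \<Rightarrow> 'a) \<Rightarrow> bool" where
  "peq p q \<longleftrightarrow> (\<exists>c. c \<noteq> 0 \<and> q = (\<lambda>k. c * p k))"

definition mapply :: "(nat \<Rightarrow> nat \<Rightarrow> 'a::field) \<Rightarrow> (nat \<Rightarrow> 'a) \<Rightarrow> nat \<Rightarrow> 'a" where
  "mapply M p = (\<lambda>i. if i < 6 then (\<Sum>k<6. M i k * p k) else 0)"

definition invertible6 :: "(nat \<Rightarrow> nat \<Rightarrow> 'a::field) \<Rightarrow> bool" where
  "invertible6 M \<longleftrightarrow> (\<exists>N. \<forall>i<6. \<forall>k<6.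
      (\<Sum>j<6. N i j * M j k) = (if i = k then 1 else 0))"

definition inGL :: "(nat \<Rightarrow> 'a::field) \<Rightarrow> (nat \<Rightarrow> nat \<Rightarrow> 'a) \<Rightarrow> bool" where
  "inGL \<theta> M \<longleftrightarrow> invertible6 M \<and> (\<forall>p\<in>vec6. p \<in> Scone \<theta> \<longleftrightarrow> mapply M p \<in> Scone \<theta>)"

definition inGL0 :: "(nat \<Rightarrow> 'a::field) \<Rightarrow> (nat \<Rightarrow> nat \<Rightarrow> 'a) \<Rightarrow> bool" where
  "inGL0 \<theta> M \<longleftrightarrow> inGL \<theta> M \<and> (\<forall>p\<in>vec6. p \<in> Delta0 \<longleftrightarrow> mapply M p \<in> Delta0)"

definition involutive_on_S :: "(nat \<Rightarrow> 'a::field) \<Rightarrow> (nat \<Rightarrow> nat \<Rightarrow> 'a) \<Rightarrow> bool" where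
  "involutive_on_S \<theta> M \<longleftrightarrow> (\<forall>p\<in>Scone \<theta>. peq p (mapply M (mapply M p)))"

text \<open>Inv(S): the group generated by the epsilon^(i), i.e. all sign changes
  pi_j -> s_j pi_j with s_j in {1,-1}. A (restricted to S) lies in Inv(S).\<close>
definition in_Inv :: "(nat \<Rightarrow> 'a::field) \<Rightarrow> (nat \<Rightarrow> nat \<Rightarrow> 'a) \<Rightarrow> bool" where
  "in_Inv \<theta> M \<longleftrightarrow> (\<exists>s. (\<forall>j\<in>{1..6}. s j = 1 \<or> s j = -1) \<and>
     (\<forall>p\<in>Scone \<theta>. \<exists>c. c \<noteq> 0 \<and>
        (\<forall>j\<in>{1..6}. piC \<theta> j (mapply M p) = c * s j * piC \<theta> j p)))"

end

theory Submission
  imports Defs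
begin

text \<open>
  A point of \<open>\<P>^5\<close> is a polynomial \<open>G\<close> of degree at most five. Lagrange
  interpolation at the six roots gives the Euler--Jacobi identity: \<open>\<Sum>j G(\<theta>j)/\<omega>j\<close> is the
  coefficient of \<open>X^5\<close> in \<open>G\<close>. Hence, with the pairings
  \<open>\<langle>G,H\<rangle>_m = \<Sum>j \<theta>j^m G(\<theta>j) H(\<theta>j)/\<omega>j\<close>, the surface \<open>\<S>\<close> is \<open>\<langle>G,G\<rangle>_m = 0\<close> (\<open>m = 0,1,2\<close>),
  \<open>\<Delta>_0\<close> is the set of linear polynomials, \<open>p_i\<close> is \<open>X - \<theta>i\<close>, and \<open>\<epsilon>^{(i)}\<close> negates the value
  at \<open>\<theta>i\<close>. For a linear \<open>A\<close> preserving \<open>\<S>\<close> and \<open>\<Delta>_0\<close> with \<open>A \<circ> A = id\<close> on \<open>\<S>\<close> we show: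
  (1) \<open>A\<close> maps every \<open>p_i\<close> to some \<open>p_k\<close> (otherwise polarization forces \<open>A(\<epsilon>^{(i)} 1)\<close>, hence
      \<open>\<epsilon>^{(i)} 1\<close>, to be linear);
  (2) if \<open>A\<close> is a scalar on \<open>\<Delta>_0\<close> it is a scalar everywhere, so \<open>A \<in> Inv(\<S>)\<close> (each \<open>P_j\<close>
      turns out to be an eigenvector).
  By (1) the roots are permuted by an involution; by (2) its fixed points are roots of a
  nonzero quadratic, which gives the numbering. Writing \<open>A(1) = a0 + a1 X\<close>, \<open>A(X) = b0 + b1 X\<close>,
  each swapped pair \<open>(x, y)\<close> satisfies \<open>b0 - a0 (x + y) - a1 x y = 0\<close>; with the normalization
  this curve is \<open>x + y = const\<close> or \<open>x y = const\<close>, which yields (a) and (b).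
\<close>

abbreviation I6 :: "nat set" where "I6 \<equiv> {1..6}"

section \<open>Lagrange interpolation at the six roots\<close>

lemma omega_eq: "omega \<theta> j = (\<Prod>i\<in>I6 - {j}. \<theta> j - \<theta> i)"
  unfolding omega_def Pj_def by (simp add: poly_prod)

lemma omega_nonzero:
  assumes "inj_on \<theta> I6" "j \<in> I6" shows "omega \<theta> j \<noteq> 0"
  using assms by (auto simp: omega_eq dest: inj_onD)

lemma poly_Pj_other:
  assumes "k \<in> I6" "k \<noteq> j" shows "poly (Pj \<theta> j) (\<theta> k) = 0"
proof -
  have "poly (Pj \<theta> j) (\<theta> k) = (\<Prod>i\<in>I6 - {j}. \<theta> k - \<theta> i)"
    unfolding Pj_def by (simp add: poly_prod)
  moreover have "k \<in> I6 - {j}" using assms by auto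
  ultimately show ?thesis by (metis (no_types) finite_Diff finite_atLeastAtMost prod_zero_iff right_minus_eq)
qed

lemma degree_Pj: "j \<in> I6 \<Longrightarrow> degree (Pj \<theta> j) = 5"
proof -
  assume j: "j \<in> I6"
  have "degree (Pj \<theta> j) = (\<Sum>i\<in>I6 - {j}. degree [:- \<theta> i, 1:])"
    unfolding Pj_def by (rule degree_prod_sum_eq) auto
  then show ?thesis using j by simp
qed

lemma coeff_Pj_5: "j \<in> I6 \<Longrightarrow> coeff (Pj \<theta> j) 5 = 1"
proof -
  assume "j \<in> I6"
  moreover have "lead_coeff (Pj \<theta> j) = 1" unfolding Pj_def by (simp add: lead_coeff_prod)
  ultimately show ?thesis by (simp add: degree_Pj)
qed

lemma poly_eq_on_roots:
  fixes G H :: "'a::field poly"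
  assumes "inj_on \<theta> I6" "degree G \<le> 5" "degree H \<le> 5"
    and "\<And>j. j \<in> I6 \<Longrightarrow> poly G (\<theta> j) = poly H (\<theta> j)"
  shows "G = H"
  by (rule poly_eqI_degree[where A = "\<theta> ` I6"]) (use assms in \<open>auto simp: card_image\<close>)

definition interp :: "(nat \<Rightarrow> 'a::field) \<Rightarrow> (nat \<Rightarrow> 'a) \<Rightarrow> 'a poly" where
  "interp \<theta> y = (\<Sum>j\<in>I6. smult (y j / omega \<theta> j) (Pj \<theta> j))"

lemma degree_interp: "degree (interp \<theta> y) \<le> 5"
  unfolding interp_def
  by (rule degree_sum_le) (auto intro: order.trans[OF degree_smult_le] simp: degree_Pj)

lemma poly_interp:
  assumes inj: "inj_on \<theta> I6" and k: "k \<in> I6"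
  shows "poly (interp \<theta> y) (\<theta> k) = y k"
proof -
  have "poly (interp \<theta> y) (\<theta> k) = (\<Sum>j\<in>I6. y j / omega \<theta> j * poly (Pj \<theta> j) (\<theta> k))"
    unfolding interp_def by (simp add: poly_sum)
  also have "\<dots> = y k / omega \<theta> k * omega \<theta> k"
    by (subst sum.remove[OF _ k]) (use k poly_Pj_other[of k _ \<theta>] in \<open>auto simp: omega_def\<close>)
  finally show ?thesis using omega_nonzero[OF inj k] by simp
qed

lemma interp_poly:
  assumes "inj_on \<theta> I6" "degree G \<le> 5"
  shows "interp \<theta> (\<lambda>j. poly G (\<theta> j)) = G"
  by (rule poly_eq_on_roots[OF assms(1) degree_interp assms(2)]) (simp add: poly_interp[OF assms(1)])

section \<open>The Euler--Jacobi residue sum and the associated pairings\<close>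

text \<open>The residue sum \<open>\<Sum>j g(\<theta>j)/\<omega>j\<close>; on a polynomial of degree at most five it
  returns the coefficient of \<open>X^5\<close> (Euler--Jacobi), since \<open>\<Sum>j P_j/\<omega>j\<close> interpolates.\<close>
definition ejsum :: "(nat \<Rightarrow> 'a::field) \<Rightarrow> ('a \<Rightarrow> 'a) \<Rightarrow> 'a" where
  "ejsum \<theta> g = (\<Sum>j\<in>I6. g (\<theta> j) / omega \<theta> j)"

lemma ejsum_cong: "(\<And>j. j \<in> I6 \<Longrightarrow> g (\<theta> j) = h (\<theta> j)) \<Longrightarrow> ejsum \<theta> g = ejsum \<theta> h"
  unfolding ejsum_def by (auto intro: sum.cong)

lemma ejsum_add: "ejsum \<theta> (\<lambda>x. g x + h x) = ejsum \<theta> g + ejsum \<theta> h"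
  unfolding ejsum_def by (simp add: sum.distrib add_divide_distrib)

lemma ejsum_scale: "ejsum \<theta> (\<lambda>x. c * g x) = c * ejsum \<theta> g"
  unfolding ejsum_def by (simp add: sum_distrib_left)

lemma ejsum_poly:
  assumes "inj_on \<theta> I6" "degree G \<le> 5"
  shows "ejsum \<theta> (poly G) = coeff G 5"
proof -
  have "coeff G 5 = coeff (interp \<theta> (\<lambda>j. poly G (\<theta> j))) 5"
    using interp_poly[OF assms] by simp
  then show ?thesis by (simp add: interp_def coeff_sum coeff_Pj_5 ejsum_def)
qed

text \<open>The pairings \<open>\<langle>G,H\<rangle>_m = \<Sum>j \<theta>j^m G(\<theta>j) H(\<theta>j)/\<omega>j\<close>, \<open>m = 0, 1, 2\<close>, whose
  quadratic forms cut out the surface \<open>\<S>\<close>.\<close>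
definition pairing :: "(nat \<Rightarrow> 'a::field) \<Rightarrow> nat \<Rightarrow> 'a poly \<Rightarrow> 'a poly \<Rightarrow> 'a" where
  "pairing \<theta> m G H = ejsum \<theta> (\<lambda>x. x ^ m * poly G x * poly H x)"

lemma pairing_commute: "pairing \<theta> m G H = pairing \<theta> m H G"
  unfolding pairing_def by (simp add: ac_simps)

lemma pairing_add_left: "pairing \<theta> m (G + G') H = pairing \<theta> m G H + pairing \<theta> m G' H"
  unfolding pairing_def ejsum_def by (simp add: algebra_simps sum.distrib add_divide_distrib)

lemma pairing_smult_left: "pairing \<theta> m (smult c G) H = c * pairing \<theta> m G H"
  unfolding pairing_def ejsum_def by (simp add: sum_distrib_left ac_simps)

lemma pairing_diff_left: "pairing \<theta> m (G - G') H = pairing \<theta> m G H - pairing \<theta> m G' H"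
  using pairing_add_left[of \<theta> m "G - G'" G' H] by simp

lemma pairing_add_right: "pairing \<theta> m H (G + G') = pairing \<theta> m H G + pairing \<theta> m H G'"
  by (simp add: pairing_commute[of \<theta> m H] pairing_add_left)

lemma pairing_smult_right: "pairing \<theta> m H (smult c G) = c * pairing \<theta> m H G"
  by (simp add: pairing_commute[of \<theta> m H] pairing_smult_left)

lemma pairing_diff_right: "pairing \<theta> m H (G - G') = pairing \<theta> m H G - pairing \<theta> m H G'"
  by (simp add: pairing_commute[of \<theta> m H] pairing_diff_left)

text \<open>The pairings are symmetric and bilinear; the expansions below are the quadratic forms
  evaluated at the combinations produced by the sign changes.\<close>
lemmas pairing_bilinear = pairing_add_left pairing_add_right pairing_smult_left
  pairing_smult_right pairing_diff_left pairing_diff_right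

lemma pairing_expand2:
  "pairing \<theta> m (smult c X - smult d Y) (smult c X - smult d Y)
     = c * c * pairing \<theta> m X X - 2 * c * d * pairing \<theta> m X Y + d * d * pairing \<theta> m Y Y"
  by (simp add: pairing_bilinear pairing_commute[of \<theta> m Y X] algebra_simps)

lemma pairing_expand3:
  "pairing \<theta> m (smult c X - smult d Y - smult e Z) (smult c X - smult d Y - smult e Z)
     = c * c * pairing \<theta> m X X + d * d * pairing \<theta> m Y Y + e * e * pairing \<theta> m Z Z
       - 2 * c * d * pairing \<theta> m X Y - 2 * c * e * pairing \<theta> m X Z + 2 * d * e * pairing \<theta> m Y Z"
  by (simp add: pairing_bilinear pairing_commute[of \<theta> m Y X] pairing_commute[of \<theta> m Z X]
      pairing_commute[of \<theta> m Z Y] algebra_simps)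

lemma pairing_cong:
  assumes "\<And>j. j \<in> I6 \<Longrightarrow> poly G (\<theta> j) * poly H (\<theta> j) = poly G' (\<theta> j) * poly H' (\<theta> j)"
  shows "pairing \<theta> m G H = pairing \<theta> m G' H'"
  unfolding pairing_def using assms by (intro ejsum_cong) (simp add: mult.assoc)

lemma pairing_as_coeff:
  assumes "inj_on \<theta> I6" "degree (monom 1 m * G * H) \<le> 5"
  shows "pairing \<theta> m G H = coeff (monom 1 m * G * H) 5"
proof -
  have "pairing \<theta> m G H = ejsum \<theta> (poly (monom 1 m * G * H))"
    unfolding pairing_def by (rule arg_cong[where f = "ejsum \<theta>"]) (simp add: fun_eq_iff poly_monom)
  then show ?thesis using ejsum_poly[OF assms] by simp
qed

lemma pairing_low_degree:
  assumes inj: "inj_on \<theta> I6" and deg: "degree G + degree H + m \<le> 4"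
  shows "pairing \<theta> m G H = 0"
proof -
  have "degree (monom (1::'a) m * G * H) \<le> m + degree G + degree H"
    by (meson add_le_mono degree_monom_le degree_mult_le order_trans order_refl)
  then have "degree (monom (1::'a) m * G * H) \<le> 4" using deg by linarith
  then show ?thesis using pairing_as_coeff[OF inj] by (simp add: coeff_eq_0)
qed

lemma pairing_Pj:
  assumes inj: "inj_on \<theta> I6" and k: "k \<in> I6"
  shows "pairing \<theta> m G (Pj \<theta> k) = \<theta> k ^ m * poly G (\<theta> k)"
proof -
  have "pairing \<theta> m G (Pj \<theta> k) = \<theta> k ^ m * poly G (\<theta> k) * omega \<theta> k / omega \<theta> k"
    unfolding pairing_def ejsum_def
    by (subst sum.remove[OF _ k]) (use k poly_Pj_other[of _ k \<theta>] in \<open>auto simp: omega_def\<close>)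
  then show ?thesis using omega_nonzero[OF inj k] by simp
qed

lemma pairing_quadratic:
  assumes inj: "inj_on \<theta> I6" and deg: "degree G \<le> 2"
  shows "pairing \<theta> 1 G G = (coeff G 2)\<^sup>2"
proof -
  have "degree (G * G) \<le> 4" using degree_mult_le[of G G] deg by simp
  moreover have "degree (monom (1::'a) 1 * G * G) \<le> degree (monom (1::'a) 1) + degree (G * G)"
    by (metis degree_mult_le mult.assoc)
  ultimately have "degree (monom 1 1 * G * G) \<le> 5"
    using degree_monom_le[of "1::'a" 1] by linarith
  then have "pairing \<theta> 1 G G = coeff (G * G) 4"
    using pairing_as_coeff[OF inj] by (simp add: coeff_monom_mult mult.assoc)
  also have "\<dots> = (coeff G 2)\<^sup>2"
  proof (cases "degree G = 2")
    case True then show ?thesis using coeff_mult_degree_sum[of G G] by (simp add: power2_eq_square)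
  next
    case False
    then have "degree (G * G) < 4" using degree_mult_le[of G G] deg by linarith
    then show ?thesis using False deg by (simp add: coeff_eq_0)
  qed
  finally show ?thesis .
qed

section \<open>Orthogonality criteria for low degree\<close>

text \<open>A polynomial of degree at most five orthogonal to \<open>1, X, X^2\<close> has degree at most two:
  each orthogonality kills one more top coefficient.\<close>
lemma degree_le_2_if_orthogonal:
  assumes inj: "inj_on \<theta> I6" and deg: "degree G \<le> 5"
    and orth: "\<And>m. m < 3 \<Longrightarrow> pairing \<theta> m G 1 = 0"
  shows "degree G \<le> 2"
proof -
  have drop: "degree G \<le> 4 - m" if "m < 3" "degree G \<le> 5 - m" for m
  proof -
    have "degree (monom 1 m * G * 1) \<le> 5"
      using that degree_mult_le[of "monom (1::'a) m" G] degree_monom_le[of "1::'a" m] by simp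
    then have "coeff G (5 - m) = 0"
      using pairing_as_coeff[OF inj] orth[OF that(1)] that(1) by (simp add: coeff_monom_mult)
    then show ?thesis
      using that(2) leading_coeff_0_iff[of G] by (cases "degree G = 5 - m") auto
  qed
  show ?thesis using drop[of 0] drop[of 1] drop[of 2] deg by simp
qed

lemma orthogonal_product_interpolant:
  assumes inj: "inj_on \<theta> I6" and orth: "\<And>m. m < 3 \<Longrightarrow> pairing \<theta> m L Y = 0"
  obtains G where "degree G \<le> 2" "\<And>j. j \<in> I6 \<Longrightarrow> poly G (\<theta> j) = poly L (\<theta> j) * poly Y (\<theta> j)"
proof
  define G where "G = interp \<theta> (\<lambda>j. poly L (\<theta> j) * poly Y (\<theta> j))"
  show vals: "poly G (\<theta> j) = poly L (\<theta> j) * poly Y (\<theta> j)" if "j \<in> I6" for j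
    unfolding G_def using poly_interp[OF inj that] .
  have "pairing \<theta> m G 1 = 0" if "m < 3" for m
    using orth[OF that] by (subst pairing_cong[where G' = L and H' = Y]) (simp_all add: vals)
  then show "degree G \<le> 2"
    using degree_le_2_if_orthogonal[OF inj] degree_interp unfolding G_def by blast
qed

text \<open>The monic polynomial with the six roots, i.e.\ \<open>F / f6\<close>.\<close>
definition root_poly :: "(nat \<Rightarrow> 'a::field) \<Rightarrow> 'a poly" where
  "root_poly \<theta> = (\<Prod>i\<in>I6. [:- \<theta> i, 1:])"

lemma poly_root_poly: "poly (root_poly \<theta>) x = (\<Prod>i\<in>I6. x - \<theta> i)"
  unfolding root_poly_def by (simp add: poly_prod)

lemma poly_root_poly_nonzero:
  assumes "\<And>j. j \<in> I6 \<Longrightarrow> \<theta> j \<noteq> r" shows "poly (root_poly \<theta>) r \<noteq> 0"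
proof -
  have "\<forall>i\<in>I6. r - \<theta> i \<noteq> 0" using assms by force
  then show ?thesis by (simp add: poly_root_poly)
qed

text \<open>Writing
  \<open>F = (X - r) H + F(r)\<close> with \<open>H\<close> monic of degree five, \<open>1/(\<theta>j - r) = -H(\<theta>j)/F(r)\<close>.\<close>
lemma ejsum_reciprocal:
  assumes inj: "inj_on \<theta> I6" and r: "\<And>j. j \<in> I6 \<Longrightarrow> \<theta> j \<noteq> r"
  shows "ejsum \<theta> (\<lambda>x. 1 / (x - r)) = - 1 / poly (root_poly \<theta>) r"
proof -
  define H where "H = synthetic_div (root_poly \<theta>) r"
  have Fr: "poly (root_poly \<theta>) r \<noteq> 0" using poly_root_poly_nonzero r by blast
  have deg_F: "degree (root_poly \<theta>) = 6" unfolding root_poly_def by (subst degree_prod_sum_eq) auto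
  have lc_F: "lead_coeff (root_poly \<theta>) = 1" unfolding root_poly_def by (simp add: lead_coeff_prod)
  have dH: "degree H = 5" unfolding H_def by (simp add: degree_synthetic_div deg_F)
  have div: "[:- r, 1:] * H + [:poly (root_poly \<theta>) r:] = root_poly \<theta>"
    unfolding H_def by (rule synthetic_div_correct')
  have "coeff ([:- r, 1:] * H + [:poly (root_poly \<theta>) r:]) 6 = 1"
    unfolding div using lc_F deg_F by simp
  then have cH: "coeff H 5 = 1" using dH by (simp add: numeral_eq_Suc coeff_eq_0)
  have val: "1 / (\<theta> j - r) = - 1 / poly (root_poly \<theta>) r * poly H (\<theta> j)" if j: "j \<in> I6" for j
  proof -
    have "poly (root_poly \<theta>) (\<theta> j) = 0" using j by (auto simp: poly_root_poly)
    then have "(\<theta> j - r) * poly H (\<theta> j) + poly (root_poly \<theta>) r = 0"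
      using arg_cong[OF div, of "\<lambda>p. poly p (\<theta> j)"] by (simp add: algebra_simps)
    moreover have "\<theta> j - r \<noteq> 0" using r[OF j] by simp
    ultimately show ?thesis using Fr by (simp add: field_simps)
  qed
  have "ejsum \<theta> (\<lambda>x. 1 / (x - r)) = ejsum \<theta> (\<lambda>x. - 1 / poly (root_poly \<theta>) r * poly H x)"
    by (rule ejsum_cong) (simp add: val)
  also have "\<dots> = - 1 / poly (root_poly \<theta>) r"
    by (simp only: ejsum_scale ejsum_poly[OF inj] dH cH) simp
  finally show ?thesis .
qed

text \<open>Solutions of \<open>\<langle>X - \<theta>i, Y\<rangle>_m = 0\<close> (\<open>m < 3\<close>): \<open>Y\<close> is a linear polynomial plus a multiple
  of \<open>P_i\<close>, because \<open>(X - \<theta>i) Y\<close> agrees at the roots with a quadratic vanishing at \<open>\<theta>i\<close>.\<close>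
lemma orthogonal_to_root_line:
  assumes inj: "inj_on \<theta> I6" and i: "i \<in> I6" and dY: "degree Y \<le> 5"
    and orth: "\<And>m. m < 3 \<Longrightarrow> pairing \<theta> m [:- \<theta> i, 1:] Y = 0"
  obtains Z d where "degree Z \<le> 1" "Y = Z + smult d (Pj \<theta> i)"
proof -
  obtain G where dG: "degree G \<le> 2"
    and vals: "\<And>j. j \<in> I6 \<Longrightarrow> poly G (\<theta> j) = (\<theta> j - \<theta> i) * poly Y (\<theta> j)"
    using orthogonal_product_interpolant[OF inj orth] by auto
  define Z where "Z = synthetic_div G (\<theta> i)"
  have "poly G (\<theta> i) = 0" using vals[OF i] by simp
  then have G: "[:- \<theta> i, 1:] * Z = G" using synthetic_div_correct'[of "\<theta> i" G] by (simp add: Z_def)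
  have dZ: "degree Z \<le> 1" unfolding Z_def using dG by (simp add: degree_synthetic_div)
  define d where "d = (poly Y (\<theta> i) - poly Z (\<theta> i)) / omega \<theta> i"
  have "Y = Z + smult d (Pj \<theta> i)"
  proof (rule poly_eq_on_roots[OF inj dY])
    show "degree (Z + smult d (Pj \<theta> i)) \<le> 5"
      using dZ degree_Pj[OF i, of \<theta>] by (intro degree_add_le) auto
    fix j assume j: "j \<in> I6"
    show "poly Y (\<theta> j) = poly (Z + smult d (Pj \<theta> i)) (\<theta> j)"
    proof (cases "j = i")
      case True then show ?thesis using omega_nonzero[OF inj i] by (simp add: d_def omega_def)
    next
      case False
      then have "\<theta> j \<noteq> \<theta> i" using inj i j by (auto dest: inj_onD)
      have "(\<theta> j - \<theta> i) * poly Y (\<theta> j) = (\<theta> j - \<theta> i) * poly Z (\<theta> j)"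
        using vals[OF j] arg_cong[OF G, of "\<lambda>p. poly p (\<theta> j)"] by (simp add: algebra_simps)
      then show ?thesis using \<open>\<theta> j \<noteq> \<theta> i\<close> poly_Pj_other[OF j False, of \<theta>] by simp
    qed
  qed
  then show ?thesis using dZ that by blast
qed

lemma coeff_linear: "coeff [:a, b:] n = (if n = 0 then a else if n = 1 then b else 0)"
  by (cases n) (auto simp: coeff_pCons split: nat.split)

lemma linear_poly_eq: "degree (U :: 'a::zero poly) \<le> 1 \<Longrightarrow> U = [:coeff U 0, coeff U 1:]"
  by (rule poly_eqI) (auto simp: coeff_linear intro: coeff_eq_0)

text \<open>If \<open>Y = G/c\<close> at the roots with \<open>G\<close> quadratic, then \<open>\<langle>Y,Y\<rangle>_1\<close> is the squared leading
  coefficient of \<open>G/c\<close>; so isotropy forces \<open>Y\<close> to be linear.\<close>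
lemma linear_if_isotropic_quotient_const:
  assumes inj: "inj_on \<theta> I6" and dY: "degree Y \<le> 5" and c: "c \<noteq> 0" and dG: "degree G \<le> 2"
    and vals: "\<And>j. j \<in> I6 \<Longrightarrow> poly G (\<theta> j) = c * poly Y (\<theta> j)"
    and iso1: "pairing \<theta> 1 Y Y = 0"
  shows "degree Y \<le> 1"
proof -
  have Y: "Y = smult (1 / c) G"
    by (rule poly_eq_on_roots[OF inj dY]) (use dG vals c in auto)
  have "(coeff G 2)\<^sup>2 = 0"
    using iso1 pairing_quadratic[OF inj dG] c by (simp add: Y pairing_bilinear)
  then have "degree G \<le> 1" using dG leading_coeff_0_iff[of G] by (cases "degree G = 2") auto
  then show ?thesis by (simp add: Y)
qed

text \<open>If \<open>Y = G/(X - r)\<close> at the roots, \<open>r\<close> not a root and \<open>G\<close> quadratic, then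
  \<open>\<langle>Y,Y\<rangle>_1 - r \<langle>Y,Y\<rangle>_0 = \<Sum> G(\<theta>j)^2/((\<theta>j - r) \<omega>j) = -G(r)^2/F(r)\<close> by the residue formula
  (divide \<open>G^2\<close> by \<open>X - r\<close>); so isotropy gives \<open>G(r) = 0\<close>, and \<open>Y\<close> is linear.\<close>
lemma linear_if_isotropic_quotient_root:
  assumes inj: "inj_on \<theta> I6" and dY: "degree Y \<le> 5"
    and r: "\<And>j. j \<in> I6 \<Longrightarrow> \<theta> j \<noteq> r" and dG: "degree G \<le> 2"
    and vals: "\<And>j. j \<in> I6 \<Longrightarrow> poly G (\<theta> j) = (\<theta> j - r) * poly Y (\<theta> j)"
    and iso0: "pairing \<theta> 0 Y Y = 0" and iso1: "pairing \<theta> 1 Y Y = 0"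
  shows "degree Y \<le> 1"
proof -
  define K where "K = synthetic_div (G * G) r"
  have dK: "degree K \<le> 3"
    unfolding K_def using degree_mult_le[of G G] dG by (simp add: degree_synthetic_div)
  have GG: "(poly G x)\<^sup>2 = (x - r) * poly K x + (poly G r)\<^sup>2" for x
    using arg_cong[OF synthetic_div_correct'[of r "G * G"], of "\<lambda>p. poly p x"]
    by (simp add: K_def power2_eq_square algebra_simps)
  have "0 = pairing \<theta> 1 Y Y - r * pairing \<theta> 0 Y Y" using iso0 iso1 by simp
  also have "\<dots> = ejsum \<theta> (\<lambda>x. (poly G r)\<^sup>2 * (1 / (x - r)) + poly K x)"
    unfolding pairing_def ejsum_def sum_distrib_left sum_subtractf[symmetric]
  proof (rule sum.cong[OF refl])
    fix j assume j: "j \<in> I6"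
    have ne: "\<theta> j - r \<noteq> 0" using r[OF j] by simp
    have "(poly G r)\<^sup>2 * (1 / (\<theta> j - r)) + poly K (\<theta> j)
        = ((\<theta> j - r) * poly K (\<theta> j) + (poly G r)\<^sup>2) / (\<theta> j - r)"
      using ne by (simp add: field_simps)
    also have "\<dots> = (poly G (\<theta> j))\<^sup>2 / (\<theta> j - r)" by (simp only: GG[of "\<theta> j"])
    also have "\<dots> = (\<theta> j - r) * (poly Y (\<theta> j))\<^sup>2"
      unfolding vals[OF j] using ne by (simp add: power2_eq_square field_simps)
    finally show "\<theta> j ^ 1 * poly Y (\<theta> j) * poly Y (\<theta> j) / omega \<theta> j
        - r * (\<theta> j ^ 0 * poly Y (\<theta> j) * poly Y (\<theta> j) / omega \<theta> j)
        = ((poly G r)\<^sup>2 * (1 / (\<theta> j - r)) + poly K (\<theta> j)) / omega \<theta> j"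
      using omega_nonzero[OF inj j] by (simp add: power2_eq_square field_simps)
  qed
  also have "\<dots> = (poly G r)\<^sup>2 * (- 1 / poly (root_poly \<theta>) r)"
    using ejsum_reciprocal[OF inj r] ejsum_poly[OF inj, of K] dK
    by (simp only: ejsum_add ejsum_scale) (simp add: coeff_eq_0)
  finally have "poly G r = 0" using poly_root_poly_nonzero[of \<theta> r] r by simp
  then have G: "[:- r, 1:] * synthetic_div G r = G" using synthetic_div_correct'[of r G] by simp
  have "Y = synthetic_div G r"
  proof (rule poly_eq_on_roots[OF inj dY])
    show "degree (synthetic_div G r) \<le> 5" using dG by (auto simp: degree_synthetic_div)
    fix j assume j: "j \<in> I6"
    have "(\<theta> j - r) * poly Y (\<theta> j) = (\<theta> j - r) * poly (synthetic_div G r) (\<theta> j)"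
      using vals[OF j] arg_cong[OF G, of "\<lambda>p. poly p (\<theta> j)"] by (simp add: algebra_simps)
    then show "poly Y (\<theta> j) = poly (synthetic_div G r) (\<theta> j)"
      using r[OF j] by (metis mult_left_cancel right_minus_eq)
  qed
  then show ?thesis using dG by (auto simp: degree_synthetic_div)
qed

text \<open>If a linear \<open>L\<close> vanishing at no root is orthogonal to \<open>Y\<close>, and \<open>Y\<close> is isotropic for the
  first two pairings, then \<open>Y\<close> is linear: \<open>LY\<close> is quadratic at the roots, and we divide by \<open>L\<close>.\<close>
lemma linear_if_orthogonal_to_unit_line:
  assumes inj: "inj_on \<theta> I6" and dL: "degree L \<le> 1"
    and L_nz: "\<And>j. j \<in> I6 \<Longrightarrow> poly L (\<theta> j) \<noteq> 0"
    and dY: "degree Y \<le> 5" and orth: "\<And>m. m < 3 \<Longrightarrow> pairing \<theta> m L Y = 0"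
    and iso0: "pairing \<theta> 0 Y Y = 0" and iso1: "pairing \<theta> 1 Y Y = 0"
  shows "degree Y \<le> 1"
proof -
  obtain G where dG: "degree G \<le> 2"
    and vals: "\<And>j. j \<in> I6 \<Longrightarrow> poly G (\<theta> j) = poly L (\<theta> j) * poly Y (\<theta> j)"
    using orthogonal_product_interpolant[OF inj orth] by auto
  obtain l0 l1 where L: "L = [:l0, l1:]" using linear_poly_eq[OF dL] by blast
  show ?thesis
  proof (cases "l1 = 0")
    case True
    have "l0 \<noteq> 0" using L_nz[of 1] by (simp add: L True)
    then show ?thesis
      using linear_if_isotropic_quotient_const[OF inj dY _ dG _ iso1] vals by (simp add: L True)
  next
    case False
    define r where "r = - l0 / l1"
    have Lr: "poly L x = l1 * (x - r)" for x using False by (simp add: L r_def field_simps)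
    have "\<theta> j \<noteq> r" if "j \<in> I6" for j using L_nz[OF that] by (simp add: Lr)
    moreover have "degree (smult (1 / l1) G) \<le> 2" using dG by simp
    moreover have "poly (smult (1 / l1) G) (\<theta> j) = (\<theta> j - r) * poly Y (\<theta> j)" if "j \<in> I6" for j
      using vals[OF that] False by (simp add: Lr)
    ultimately show ?thesis using linear_if_isotropic_quotient_root[OF inj dY _ _ _ iso0 iso1] by blast
  qed
qed

section \<open>Points of \<open>\<P>^5\<close> as polynomials of degree at most five\<close>

lemma coeff_Ppoly: "coeff (Ppoly p) n = (if n < 6 then p n else 0)"
  unfolding Ppoly_def by (simp add: coeff_sum)

lemma degree_Ppoly: "degree (Ppoly p) \<le> 5"
  by (rule degree_le) (simp add: coeff_Ppoly)

lemma Ppoly_coeff: "degree G \<le> 5 \<Longrightarrow> Ppoly (\<lambda>k. coeff G k) = G"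
  by (rule poly_eqI) (auto simp: coeff_Ppoly intro!: coeff_eq_0)

lemma vec6_coeff: "degree G \<le> 5 \<Longrightarrow> (\<lambda>k. coeff G k) \<in> vec6"
  by (auto simp: vec6_def intro!: coeff_eq_0)

lemma coeff_Ppoly_vec6: "p \<in> vec6 \<Longrightarrow> (\<lambda>k. coeff (Ppoly p) k) = p"
  by (auto simp: vec6_def coeff_Ppoly)

lemma Ppoly_add: "Ppoly (\<lambda>k. p k + q k) = Ppoly p + Ppoly q"
  by (rule poly_eqI) (simp add: coeff_Ppoly)

lemma Ppoly_smult: "Ppoly (\<lambda>k. c * p k) = smult c (Ppoly p)"
  by (rule poly_eqI) (simp add: coeff_Ppoly)

lemma Ppoly_eq_0_iff: "p \<in> vec6 \<Longrightarrow> Ppoly p = 0 \<longleftrightarrow> p = (\<lambda>_. 0)"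
proof
  assume "p \<in> vec6" "Ppoly p = 0"
  then show "p = (\<lambda>_. 0)" using coeff_Ppoly_vec6[of p] by simp
qed (simp add: Ppoly_def)

lemma peq_iff:
  assumes "p \<in> vec6" "q \<in> vec6"
  shows "peq p q \<longleftrightarrow> (\<exists>c. c \<noteq> 0 \<and> Ppoly q = smult c (Ppoly p))"
proof
  assume "peq p q" then show "\<exists>c. c \<noteq> 0 \<and> Ppoly q = smult c (Ppoly p)"
    unfolding peq_def by (auto simp: Ppoly_smult)
next
  assume "\<exists>c. c \<noteq> 0 \<and> Ppoly q = smult c (Ppoly p)"
  then obtain c where c: "c \<noteq> 0" "Ppoly q = smult c (Ppoly p)" by blast
  have "q = (\<lambda>k. c * coeff (Ppoly p) k)" using c(2) coeff_Ppoly_vec6[OF assms(2)] by force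
  then show "peq p q" using c(1) coeff_Ppoly_vec6[OF assms(1)] unfolding peq_def by auto
qed

lemma ppt_vec6: "ppt \<theta> i \<in> vec6"
  by (simp add: ppt_def vec6_def)

lemma Ppoly_ppt: "Ppoly (ppt \<theta> i) = [:- \<theta> i, 1:]"
  by (rule poly_eqI) (simp only: coeff_Ppoly coeff_linear ppt_def, auto)

definition inS :: "(nat \<Rightarrow> 'a::field) \<Rightarrow> 'a poly \<Rightarrow> bool" where
  "inS \<theta> G \<longleftrightarrow> G \<noteq> 0 \<and> degree G \<le> 5 \<and> (\<forall>m<3. pairing \<theta> m G G = 0)"

lemma Scone_iff:
  assumes inj: "inj_on \<theta> I6"
  shows "p \<in> Scone \<theta> \<longleftrightarrow> p \<in> vec6 \<and> inS \<theta> (Ppoly p)"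
proof -
  have "(\<Sum>j\<in>I6. \<theta> j ^ m * omega \<theta> j * (piC \<theta> j p)\<^sup>2) = pairing \<theta> m (Ppoly p) (Ppoly p)" for m
    unfolding pairing_def ejsum_def piC_def
    by (rule sum.cong) (use omega_nonzero[OF inj] in \<open>auto simp: power2_eq_square field_simps\<close>)
  then show ?thesis
    unfolding Scone_def inS_def using Ppoly_eq_0_iff[of p] degree_Ppoly[of p] by auto
qed

lemma Delta0_iff: "p \<in> Delta0 \<longleftrightarrow> p \<in> vec6 \<and> degree (Ppoly p) \<le> 1"
proof
  assume "p \<in> Delta0" then show "p \<in> vec6 \<and> degree (Ppoly p) \<le> 1"
    unfolding Delta0_def by (auto intro!: degree_le simp: coeff_Ppoly)
next
  assume p: "p \<in> vec6 \<and> degree (Ppoly p) \<le> 1"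
  have "p k = 0" if "k \<ge> 2" for k
    using p that coeff_eq_0[of "Ppoly p" k] by (auto simp: coeff_Ppoly vec6_def split: if_splits)
  then show "p \<in> Delta0" using p unfolding Delta0_def by auto
qed

section \<open>Linear maps in polynomial form\<close>

definition act :: "(nat \<Rightarrow> nat \<Rightarrow> 'a::field) \<Rightarrow> 'a poly \<Rightarrow> 'a poly" where
  "act M G = Ppoly (mapply M (\<lambda>k. coeff G k))"

lemma mapply_vec6: "mapply M p \<in> vec6"
  by (simp add: mapply_def vec6_def)

lemma Ppoly_mapply: "p \<in> vec6 \<Longrightarrow> Ppoly (mapply M p) = act M (Ppoly p)"
  by (simp add: act_def coeff_Ppoly_vec6)

lemma degree_act: "degree (act M G) \<le> 5"
  by (simp add: act_def degree_Ppoly)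

lemma act_add: "act M (G + H) = act M G + act M H"
proof -
  have "mapply M (\<lambda>k. coeff G k + coeff H k) = (\<lambda>i. mapply M (\<lambda>k. coeff G k) i + mapply M (\<lambda>k. coeff H k) i)"
    by (auto simp: mapply_def distrib_left sum.distrib)
  then show ?thesis by (simp add: act_def Ppoly_add)
qed

lemma act_smult: "act M (smult c G) = smult c (act M G)"
proof -
  have "mapply M (\<lambda>k. c * coeff G k) = (\<lambda>i. c * mapply M (\<lambda>k. coeff G k) i)"
    by (auto simp: mapply_def sum_distrib_left ac_simps)
  then show ?thesis by (simp add: act_def Ppoly_smult)
qed

lemma act_diff: "act M (G - H) = act M G - act M H"
  using act_add[of M "G - H" H] by simp

lemma act_sum: "act M (\<Sum>i\<in>A. f i) = (\<Sum>i\<in>A. act M (f i))"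
  by (induction A rule: infinite_finite_induct) (auto simp: act_add act_smult[of M 0 0, simplified])

lemma mapply_eq_0:
  assumes "invertible6 M" "p \<in> vec6" "mapply M p = (\<lambda>_. 0)"
  shows "p = (\<lambda>_. 0)"
proof
  fix k
  obtain N where N: "\<forall>i<6. \<forall>k<6. (\<Sum>j<6. N i j * M j k) = (if i = k then 1 else 0)"
    using assms(1) unfolding invertible6_def by blast
  show "p k = 0"
  proof (cases "k < 6")
    case True
    have "p k = (\<Sum>l<6. (if k = l then p l else 0))" using True by simp
    also have "\<dots> = (\<Sum>l<6. (\<Sum>j<6. N k j * M j l) * p l)"
      using N True by (intro sum.cong) auto
    also have "\<dots> = (\<Sum>j<6. N k j * (\<Sum>l<6. M j l * p l))"
      by (simp add: sum_distrib_left sum_distrib_right mult.assoc) (rule sum.swap)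
    also have "\<dots> = (\<Sum>j<6. N k j * mapply M p j)"
      by (intro sum.cong) (auto simp: mapply_def)
    finally show ?thesis using assms(3) by simp
  next
    case False then show ?thesis using assms(2) by (simp add: vec6_def)
  qed
qed

lemma act_eq_0:
  assumes "invertible6 M" "degree G \<le> 5" "act M G = 0"
  shows "G = 0"
proof -
  have "mapply M (\<lambda>k. coeff G k) = (\<lambda>_. 0)"
    using assms(3) Ppoly_eq_0_iff[OF mapply_vec6] unfolding act_def by blast
  then have "(\<lambda>k. coeff G k) = (\<lambda>_. 0)"
    using mapply_eq_0[OF assms(1) vec6_coeff[OF assms(2)]] by blast
  then show ?thesis by (simp add: poly_eq_iff)
qed

section \<open>The sign changes \<open>\<epsilon>^{(i)}\<close>\<close>

text \<open>\<open>flip \<theta> i G\<close> is \<open>\<epsilon>^{(i)}(G)\<close>: it negates the value at \<open>\<theta>i\<close> and keeps the others.\<close>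
definition flip :: "(nat \<Rightarrow> 'a::field) \<Rightarrow> nat \<Rightarrow> 'a poly \<Rightarrow> 'a poly" where
  "flip \<theta> i G = G - smult (2 * poly G (\<theta> i) / omega \<theta> i) (Pj \<theta> i)"

lemma poly_flip:
  assumes inj: "inj_on \<theta> I6" and "i \<in> I6" "j \<in> I6"
  shows "poly (flip \<theta> i G) (\<theta> j) = (if j = i then - poly G (\<theta> i) else poly G (\<theta> j))"
proof (cases "j = i")
  case True
  then show ?thesis using omega_nonzero[OF assms(1,2)] by (simp add: flip_def omega_def)
next
  case False
  then show ?thesis using poly_Pj_other[OF assms(3) False, of \<theta>] by (simp add: flip_def)
qed

lemma degree_flip: "i \<in> I6 \<Longrightarrow> degree G \<le> 5 \<Longrightarrow> degree (flip \<theta> i G) \<le> 5"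
  unfolding flip_def using degree_Pj[of i \<theta>] by (intro degree_diff_le) auto

lemma act_flip:
  "act M (flip \<theta> i G) = act M G - smult (2 * poly G (\<theta> i) / omega \<theta> i) (act M (Pj \<theta> i))"
  by (simp add: flip_def act_diff act_smult)

text \<open>The sign changes preserve \<open>\<S>\<close>, since its equations only involve squared values.\<close>
lemma inS_flip:
  assumes inj: "inj_on \<theta> I6" and i: "i \<in> I6" and G: "inS \<theta> G"
  shows "inS \<theta> (flip \<theta> i G)"
proof -
  have deg: "degree G \<le> 5" using G by (simp add: inS_def)
  have sq: "poly (flip \<theta> i G) (\<theta> j) * poly (flip \<theta> i G) (\<theta> j) = poly G (\<theta> j) * poly G (\<theta> j)"
    if "j \<in> I6" for j
    using poly_flip[OF inj i that] by simp
  have "flip \<theta> i G \<noteq> 0"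
  proof
    assume "flip \<theta> i G = 0"
    then have "G = 0"
      using poly_eq_on_roots[OF inj deg, of 0] sq by (metis degree_0 mult_zero_left no_zero_divisors poly_0 zero_le)
    then show False using G by (simp add: inS_def)
  qed
  moreover have "pairing \<theta> m (flip \<theta> i G) (flip \<theta> i G) = pairing \<theta> m G G" for m
    by (rule pairing_cong) (rule sq)
  ultimately show ?thesis using G degree_flip[OF i deg] by (simp add: inS_def)
qed

lemma inS_linear:
  assumes "inj_on \<theta> I6" "degree U \<le> 1" "U \<noteq> 0" shows "inS \<theta> U"
  using assms pairing_low_degree[OF assms(1), of U U] by (auto simp: inS_def)

lemma pairing_polarization:
  fixes \<theta> :: "nat \<Rightarrow> 'a::field"
  assumes two: "(2::'a) \<noteq> 0"
    and "inS \<theta> G" "inS \<theta> H" "inS \<theta> (G + H)" "m < 3"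
  shows "pairing \<theta> m G H = 0"
proof -
  have "pairing \<theta> m (G + H) (G + H) = pairing \<theta> m G G + 2 * pairing \<theta> m G H + pairing \<theta> m H H"
    by (simp add: pairing_bilinear pairing_commute[of \<theta> m H G])
  then show ?thesis using assms by (simp add: inS_def)
qed

section \<open>Symmetric curves and numberings of the roots\<close>

lemma symmetric_curve_shape:
  fixes a0 a1 b0 p q r s :: "'a::field"
  assumes nz: "a0 \<noteq> 0 \<or> a1 \<noteq> 0"
    and pq: "b0 - a0 * (p + q) - a1 * (p * q) = 0" and rs: "b0 - a0 * (r + s) - a1 * (r * s) = 0"
    and dist: "r \<noteq> p" "r \<noteq> q" "s \<noteq> p" "s \<noteq> q"
    and sp: "p + q = r + s \<or> p * q = r * s"
  shows "(p + q = r + s \<and> (\<forall>x y. b0 - a0 * (x + y) - a1 * (x * y) = 0 \<longrightarrow> x + y = p + q)) \<or>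
         (p * q = r * s \<and> p * q \<noteq> 0 \<and> (\<forall>x y. b0 - a0 * (x + y) - a1 * (x * y) = 0 \<longrightarrow> x * y = p * q))"
proof (cases "p + q = r + s")
  case True
  have "p * q \<noteq> r * s"
  proof
    assume prod: "p * q = r * s"
    have "(r - p) * (r - q) = r * r - r * (p + q) + p * q" by (simp add: algebra_simps)
    also have "\<dots> = 0" using True prod by (simp add: algebra_simps)
    finally show False using dist by simp
  qed
  moreover have "a1 * (p * q - r * s) = 0" using pq rs True by (simp add: algebra_simps)
  ultimately have a: "a1 = 0" "a0 \<noteq> 0" using nz by auto
  have "x + y = p + q" if "b0 - a0 * (x + y) - a1 * (x * y) = 0" for x y
    using that pq a by (simp add: right_diff_distrib[symmetric])
  then show ?thesis using True by blast
next
  case False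
  then have prod: "p * q = r * s" using sp by blast
  have "a0 * ((p + q) - (r + s)) = 0" using pq rs prod by (simp add: algebra_simps)
  then have a: "a0 = 0" "a1 \<noteq> 0" using nz False by auto
  have "p * q \<noteq> 0" using prod dist by auto
  moreover have "x * y = p * q" if "b0 - a0 * (x + y) - a1 * (x * y) = 0" for x y
    using that pq a by (simp add: right_diff_distrib[symmetric])
  ultimately show ?thesis using prod by blast
qed

lemma numbering_of_four:
  assumes sub: "{i3, i4, i5, i6} \<subseteq> I6" and dist: "distinct [i3, i4, i5, i6]"
  obtains \<sigma> where "\<sigma> permutes I6" "\<sigma> 3 = i3" "\<sigma> 4 = i4" "\<sigma> 5 = i5" "\<sigma> 6 = i6"
proof -
  have "card (I6 - {i3, i4, i5, i6}) = 2" using sub dist by (subst card_Diff_subset) auto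
  then obtain i1 i2 where rest: "I6 - {i3, i4, i5, i6} = {i1, i2}" by (auto simp: card_2_iff)
  define \<sigma> where "\<sigma> n = (if n = 1 then i1 else if n = 2 then i2 else if n = 3 then i3
      else if n = 4 then i4 else if n = 5 then i5 else if n = 6 then i6 else n)" for n :: nat
  have I6: "I6 = {1, 2, 3, 4, 5, 6}" by auto
  have "\<sigma> ` I6 = {i1, i2, i3, i4, i5, i6}" unfolding I6 by (simp add: \<sigma>_def insert_commute)
  also have "\<dots> = (I6 - {i3, i4, i5, i6}) \<union> {i3, i4, i5, i6}" by (simp only: rest) auto
  also have "\<dots> = I6" using sub by blast
  finally have img: "\<sigma> ` I6 = I6" .
  then have "card (\<sigma> ` I6) = card I6" by (simp only: img)
  then have "inj_on \<sigma> I6" by (intro eq_card_imp_inj_on) auto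
  then have "bij_betw \<sigma> I6 I6" using img by (simp add: bij_betw_def)
  moreover have "\<sigma> n = n" if "n \<notin> I6" for n using that by (auto simp: \<sigma>_def)
  ultimately have "\<sigma> permutes I6" by (rule bij_imp_permutes)
  then show ?thesis using that by (simp add: \<sigma>_def)
qed

lemma involution_numbering:
  assumes \<tau>: "\<And>i. i \<in> I6 \<Longrightarrow> \<tau> i \<in> I6 \<and> \<tau> (\<tau> i) = i"
    and few: "card {i \<in> I6. \<tau> i = i} \<le> 2"
  shows "\<exists>\<sigma>. \<sigma> permutes I6 \<and> \<tau> (\<sigma> 3) = \<sigma> 4 \<and> \<tau> (\<sigma> 5) = \<sigma> 6"
proof -
  define NF where "NF = {i \<in> I6. \<tau> i \<noteq> i}"
  have "card I6 = card (NF \<union> {i \<in> I6. \<tau> i = i})" by (rule arg_cong[where f = card]) (auto simp: NF_def)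
  also have "\<dots> = card NF + card {i \<in> I6. \<tau> i = i}" by (rule card_Un_disjoint) (auto simp: NF_def)
  finally have "card I6 = card NF + card {i \<in> I6. \<tau> i = i}" .
  then have cNF: "card NF \<ge> 4" using few by simp
  obtain i3 where i3: "i3 \<in> NF" using cNF by fastforce
  define i4 where "i4 = \<tau> i3"
  have "card {i3, i4} \<le> 2" by (simp add: card_insert_if)
  then have "card (NF - {i3, i4}) \<ge> 2"
    using cNF diff_card_le_card_Diff[of "{i3, i4}" NF] by simp
  then have "NF - {i3, i4} \<noteq> {}" by (metis card.empty not_numeral_le_zero)
  then obtain i5 where i5: "i5 \<in> NF - {i3, i4}" by blast
  define i6 where "i6 = \<tau> i5"
  have I: "i3 \<in> I6" "i5 \<in> I6" "i4 \<in> I6" "i6 \<in> I6" "\<tau> i4 = i3" "\<tau> i6 = i5"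
    using i3 i5 \<tau> unfolding i4_def i6_def NF_def by auto
  have "{i3, i4, i5, i6} \<subseteq> I6" using I by auto
  moreover have "distinct [i3, i4, i5, i6]"
  proof -
    have "i4 \<noteq> i3" "i6 \<noteq> i5" using i3 i5 unfolding i4_def i6_def NF_def by auto
    moreover have "i5 \<noteq> i3" "i5 \<noteq> i4" using i5 by auto
    moreover have "i6 \<noteq> i3" "i6 \<noteq> i4" using I(5,6) \<open>i5 \<noteq> i3\<close> \<open>i5 \<noteq> i4\<close> by (auto simp: i4_def)
    ultimately show ?thesis by auto
  qed
  ultimately obtain \<sigma> where "\<sigma> permutes I6" "\<sigma> 3 = i3" "\<sigma> 4 = i4" "\<sigma> 5 = i5" "\<sigma> 6 = i6"
    by (rule numbering_of_four)
  then show ?thesis unfolding i4_def i6_def by auto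
qed

section \<open>The points \<open>p_i\<close> under a linear map\<close>

text \<open>\<open>maps_to M x y\<close>: the map sends the point \<open>X - x\<close> of \<open>\<Delta>_0\<close> to the point \<open>X - y\<close>.\<close>
definition maps_to :: "(nat \<Rightarrow> nat \<Rightarrow> 'a::field) \<Rightarrow> 'a \<Rightarrow> 'a \<Rightarrow> bool" where
  "maps_to M x y \<longleftrightarrow> (\<exists>c. c \<noteq> 0 \<and> [:- y, 1:] = smult c (act M [:- x, 1:]))"

lemma peq_ppt_iff: "peq (mapply M (ppt \<theta> i)) (ppt \<theta> k) \<longleftrightarrow> maps_to M (\<theta> i) (\<theta> k)"
  unfolding maps_to_def
  by (simp add: peq_iff[OF mapply_vec6 ppt_vec6] Ppoly_mapply[OF ppt_vec6] Ppoly_ppt)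

lemma maps_to_root: "maps_to M x y \<Longrightarrow> poly (act M [:- x, 1:]) y = 0"
  unfolding maps_to_def by (auto dest: arg_cong[where f = "\<lambda>p. poly p y"])

lemma maps_to_unique:
  assumes "maps_to M x y" "maps_to M x y'" shows "y = y'"
proof -
  obtain c where "[:- y, 1:] = smult c (act M [:- x, 1:])" using assms(1) unfolding maps_to_def by blast
  then have "poly [:- y, 1:] y' = 0" using maps_to_root[OF assms(2)] by simp
  then show ?thesis by simp
qed

lemma maps_to_equation:
  assumes "maps_to M x y"
  shows "poly (act M [:0, 1:]) y = x * poly (act M [:1:]) y"
proof -
  have "[:- x, 1:] = [:0, 1:] - smult x [:1:]" by simp
  then have "act M [:- x, 1:] = act M [:0, 1:] - smult x (act M [:1:])"
    by (simp only: act_diff act_smult)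
  then show ?thesis using maps_to_root[OF assms] by simp
qed

lemma linear_root_factor:
  fixes U :: "'a::field poly"
  assumes "degree U \<le> 1" "U \<noteq> 0" "poly U a = 0"
  shows "\<exists>c. c \<noteq> 0 \<and> [:- a, 1:] = smult c U"
proof -
  obtain u0 u1 where U: "U = [:u0, u1:]" using linear_poly_eq[OF assms(1)] by blast
  have u1: "u1 \<noteq> 0" using assms(2,3) by (auto simp: U)
  have "u0 = - u1 * a" using assms(3) by (simp add: U eq_neg_iff_add_eq_0 mult.commute)
  then have "[:- a, 1:] = smult (1 / u1) U" using u1 by (simp add: U)
  then show ?thesis using u1 by (intro exI[of _ "1 / u1"]) simp
qed

lemma act_linear: "act M [:u0, u1:] = smult u0 (act M [:1:]) + smult u1 (act M [:0, 1:])"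
proof -
  have "[:u0, u1:] = smult u0 [:1:] + smult u1 [:0, 1:]" by simp
  then show ?thesis by (simp only: act_add act_smult)
qed

section \<open>Automorphisms of \<open>\<S>\<close> preserving \<open>\<Delta>_0\<close>\<close>

context
  fixes \<theta> :: "nat \<Rightarrow> 'a::field" and M :: "nat \<Rightarrow> nat \<Rightarrow> 'a"
  assumes inj: "inj_on \<theta> I6" and two: "(2::'a) \<noteq> 0"
    and GL0: "inGL0 \<theta> M" and invol: "involutive_on_S \<theta> M"
begin

lemma act_preserves_S: "degree G \<le> 5 \<Longrightarrow> inS \<theta> (act M G) \<longleftrightarrow> inS \<theta> G"
  using GL0 vec6_coeff[of G] Ppoly_coeff[of G] mapply_vec6[of M]
  unfolding inGL0_def inGL_def Scone_iff[OF inj] act_def by metis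

lemma act_preserves_lines: "degree G \<le> 5 \<Longrightarrow> degree (act M G) \<le> 1 \<longleftrightarrow> degree G \<le> 1"
  using GL0 vec6_coeff[of G] Ppoly_coeff[of G] mapply_vec6[of M]
  unfolding inGL0_def Delta0_iff act_def by metis

lemma act_line: "degree G \<le> 1 \<Longrightarrow> degree (act M G) \<le> 1"
  using act_preserves_lines[of G] by simp

lemma act_injective: "degree G \<le> 5 \<Longrightarrow> act M G = 0 \<Longrightarrow> G = 0"
  using act_eq_0 GL0 unfolding inGL0_def inGL_def by blast

lemma act_act:
  assumes G: "inS \<theta> G" shows "\<exists>c. c \<noteq> 0 \<and> act M (act M G) = smult c G"
proof -
  have d: "degree G \<le> 5" using G by (simp add: inS_def)
  let ?p = "\<lambda>k. coeff G k"
  have "?p \<in> Scone \<theta>" using G vec6_coeff[OF d] Ppoly_coeff[OF d] by (simp add: Scone_iff[OF inj])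
  then have "peq ?p (mapply M (mapply M ?p))" using invol unfolding involutive_on_S_def by blast
  then obtain c where "c \<noteq> 0" "Ppoly (mapply M (mapply M ?p)) = smult c (Ppoly ?p)"
    using peq_iff[OF vec6_coeff[OF d] mapply_vec6] by blast
  then show ?thesis using Ppoly_coeff[OF d] by (auto simp: Ppoly_mapply[OF mapply_vec6] act_def)
qed

lemma maps_to_sym:
  assumes "maps_to M x y" shows "maps_to M y x"
proof -
  obtain c where c: "c \<noteq> 0" "[:- y, 1:] = smult c (act M [:- x, 1:])"
    using assms unfolding maps_to_def by blast
  obtain c' where c': "c' \<noteq> 0" "act M (act M [:- x, 1:]) = smult c' [:- x, 1:]"
    using act_act[OF inS_linear[OF inj, of "[:- x, 1:]"]] by auto
  have "act M [:- y, 1:] = act M (smult c (act M [:- x, 1:]))" using c(2) by (rule arg_cong)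
  also have "\<dots> = smult (c * c') [:- x, 1:]" using c'(2) by (simp add: act_smult)
  finally have "act M [:- y, 1:] = smult (c * c') [:- x, 1:]" .
  then show ?thesis unfolding maps_to_def using c c'
    by (intro exI[of _ "1 / (c * c')"]) simp
qed

text \<open>Otherwise \<open>U = A(X - \<theta>i)\<close> vanishes at no root;
  with \<open>w = \<epsilon>^{(i)}(1)\<close>, both \<open>w\<close> and \<open>X - \<theta>i + w = \<epsilon>^{(i)}(X - \<theta>i + 1)\<close> lie on \<open>\<S>\<close>, so by
  polarization \<open>A(w)\<close> is orthogonal to \<open>U\<close> and hence linear -- but \<open>w\<close> has degree five.\<close>
lemma maps_to_some_root:
  assumes i: "i \<in> I6" shows "\<exists>k\<in>I6. maps_to M (\<theta> i) (\<theta> k)"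
proof (rule ccontr)
  assume none: "\<not> (\<exists>k\<in>I6. maps_to M (\<theta> i) (\<theta> k))"
  define L where "L = [:- \<theta> i, 1:]"
  define w where "w = flip \<theta> i 1"
  have dw: "degree w \<le> 5" unfolding w_def by (rule degree_flip[OF i]) simp
  have U: "degree (act M L) \<le> 1" "act M L \<noteq> 0" "inS \<theta> (act M L)"
    using act_line[of L] act_injective[of L] act_preserves_S[of L] inS_linear[OF inj, of L]
    by (auto simp: L_def)
  have U_nz: "poly (act M L) (\<theta> k) \<noteq> 0" if "k \<in> I6" for k
    using linear_root_factor[OF U(1,2)] none that unfolding maps_to_def L_def by blast
  have Sw: "inS \<theta> w" unfolding w_def by (intro inS_flip[OF inj i] inS_linear[OF inj]) auto
  have "L + w = flip \<theta> i (L + 1)" by (simp add: w_def flip_def L_def)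
  moreover have "inS \<theta> (L + 1)" by (rule inS_linear[OF inj]) (simp_all add: L_def one_pCons)
  ultimately have SLw: "inS \<theta> (L + w)" using inS_flip[OF inj i] by simp
  have SY: "inS \<theta> (act M w)" using Sw act_preserves_S[OF dw] by simp
  have SUY: "inS \<theta> (act M L + act M w)"
    using SLw act_preserves_S[of "L + w"] dw by (simp add: act_add L_def degree_add_le)
  have "degree (act M w) \<le> 1"
  proof (rule linear_if_orthogonal_to_unit_line[OF inj U(1) U_nz degree_act])
    show "pairing \<theta> m (act M L) (act M w) = 0" if "m < 3" for m
      by (rule pairing_polarization[OF two U(3) SY SUY that])
    show "pairing \<theta> 0 (act M w) (act M w) = 0" "pairing \<theta> 1 (act M w) (act M w) = 0"
      using SY by (simp_all add: inS_def)
  qed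
  then have "degree w \<le> 1" using act_preserves_lines[OF dw] by simp
  moreover have "coeff w 5 \<noteq> 0"
    using two omega_nonzero[OF inj i] coeff_Pj_5[OF i, of \<theta>] by (simp add: w_def flip_def)
  ultimately show False using le_degree[of w 5] by simp
qed

text \<open>If \<open>A\<close> is the scalar \<open>lm\<close> on \<open>\<Delta>_0\<close>, then \<open>A\<close> is a scalar everywhere, in particular
  \<open>A \<in> Inv(\<S>)\<close>. The argument shows that each \<open>P_i\<close> of the interpolation basis is an
  eigenvector of \<open>A\<close>.\<close>
context
  fixes lm :: 'a
  assumes lm: "lm \<noteq> 0" and scalar: "\<And>U. degree U \<le> 1 \<Longrightarrow> act M U = smult lm U"
begin

text \<open>Applying \<open>A\<close> to \<open>\<epsilon>^{(i)}(U) = U - a P_i\<close> with \<open>U\<close> linear and expanding the equations of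
  \<open>\<S>\<close> at \<open>lm U - a A(P_i)\<close> gives \<open>a^2 \<langle>A P_i, A P_i\<rangle> = 2 lm a \<langle>U, A P_i\<rangle>\<close>.\<close>
lemma image_Pj_identity:
  assumes i: "i \<in> I6" and dU: "degree U \<le> 1" and m: "m < 3"
  defines "a \<equiv> 2 * poly U (\<theta> i) / omega \<theta> i"
  shows "a * a * pairing \<theta> m (act M (Pj \<theta> i)) (act M (Pj \<theta> i))
       = 2 * lm * a * pairing \<theta> m U (act M (Pj \<theta> i))"
proof (cases "U = 0")
  case False
  let ?t = "act M (Pj \<theta> i)"
  have "inS \<theta> (flip \<theta> i U)" using inS_flip[OF inj i inS_linear[OF inj dU False]] .
  moreover have "degree (flip \<theta> i U) \<le> 5" by (rule degree_flip[OF i]) (use dU in simp)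
  ultimately have "inS \<theta> (act M (flip \<theta> i U))" using act_preserves_S by blast
  moreover have "act M (flip \<theta> i U) = smult lm U - smult a ?t"
    by (simp add: act_flip scalar[OF dU] a_def)
  ultimately have "pairing \<theta> m (smult lm U - smult a ?t) (smult lm U - smult a ?t) = 0"
    using m by (simp add: inS_def)
  moreover have "pairing \<theta> m U U = 0" using pairing_low_degree[OF inj] dU m by simp
  ultimately show ?thesis unfolding pairing_expand2 by algebra
qed (simp add: a_def)

text \<open>\<open>A(P_i) = Z + d P_i\<close> with \<open>Z\<close> linear and \<open>d \<noteq> 0\<close>: taking \<open>U = 1\<close> and \<open>U = X - \<theta>i + 1\<close>
  above shows that \<open>A(P_i)\<close> is orthogonal to \<open>X - \<theta>i\<close>.\<close>
lemma image_Pj_decomposition: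
  assumes i: "i \<in> I6"
  obtains Z d where "degree Z \<le> 1" "d \<noteq> 0" "act M (Pj \<theta> i) = Z + smult d (Pj \<theta> i)"
proof -
  let ?t = "act M (Pj \<theta> i)"
  define a where "a = 2 / omega \<theta> i"
  have a: "a \<noteq> 0" using two omega_nonzero[OF inj i] by (simp add: a_def)
  have "pairing \<theta> m [:- \<theta> i, 1:] ?t = 0" if m: "m < 3" for m
  proof -
    have "a * a * pairing \<theta> m ?t ?t = 2 * lm * a * pairing \<theta> m 1 ?t"
      using image_Pj_identity[OF i _ m, of 1] by (simp add: a_def)
    moreover have "a * a * pairing \<theta> m ?t ?t = 2 * lm * a * pairing \<theta> m ([:- \<theta> i, 1:] + 1) ?t"
      using image_Pj_identity[OF i _ m, of "[:- \<theta> i, 1:] + 1"] by (simp add: a_def one_pCons)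
    ultimately have "2 * lm * a * pairing \<theta> m [:- \<theta> i, 1:] ?t = 0"
      unfolding pairing_add_left by algebra
    then show ?thesis using two lm a by simp
  qed
  then obtain Z d where Z: "degree Z \<le> 1" and t: "?t = Z + smult d (Pj \<theta> i)"
    using orthogonal_to_root_line[OF inj i degree_act] by blast
  have "d \<noteq> 0"
  proof
    assume "d = 0"
    then have "degree (Pj \<theta> i) \<le> 1" using act_preserves_lines[of "Pj \<theta> i"] Z t degree_Pj[OF i, of \<theta>] by simp
    then show False using degree_Pj[OF i, of \<theta>] by simp
  qed
  then show ?thesis using that Z t by blast
qed

text \<open>The images of distinct \<open>P_i\<close>, \<open>P_k\<close> are orthogonal: expand the equations of \<open>\<S>\<close> at
  \<open>A(\<epsilon>^{(k)} \<epsilon>^{(i)} 1) = lm - a A(P_i) - b A(P_k)\<close> and use the identity above for \<open>U = 1\<close>.\<close>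
lemma image_Pj_orthogonal:
  assumes i: "i \<in> I6" and k: "k \<in> I6" and ik: "i \<noteq> k" and m: "m < 3"
  shows "pairing \<theta> m (act M (Pj \<theta> i)) (act M (Pj \<theta> k)) = 0"
proof -
  let ?ti = "act M (Pj \<theta> i)" and ?tk = "act M (Pj \<theta> k)"
  define a where "a = 2 / omega \<theta> i"
  define b where "b = 2 / omega \<theta> k"
  have ab: "a \<noteq> 0" "b \<noteq> 0" using two omega_nonzero[OF inj i] omega_nonzero[OF inj k] by (auto simp: a_def b_def)
  define V where "V = flip \<theta> k (flip \<theta> i 1)"
  have "inS \<theta> V" unfolding V_def by (intro inS_flip[OF inj] i k inS_linear[OF inj]) auto
  moreover have "degree V \<le> 5" unfolding V_def by (intro degree_flip i k) simp
  ultimately have "inS \<theta> (act M V)" using act_preserves_S by blast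
  moreover have "act M V = smult lm 1 - smult a ?ti - smult b ?tk"
    using poly_flip[OF inj i k] ik by (simp add: V_def act_flip scalar a_def b_def)
  ultimately have "pairing \<theta> m (smult lm 1 - smult a ?ti - smult b ?tk) (smult lm 1 - smult a ?ti - smult b ?tk) = 0"
    using m by (simp add: inS_def)
  moreover have "a * a * pairing \<theta> m ?ti ?ti = 2 * lm * a * pairing \<theta> m 1 ?ti"
    using image_Pj_identity[OF i _ m, of 1] by (simp add: a_def)
  moreover have "b * b * pairing \<theta> m ?tk ?tk = 2 * lm * b * pairing \<theta> m 1 ?tk"
    using image_Pj_identity[OF k _ m, of 1] by (simp add: b_def)
  moreover have "pairing \<theta> m 1 1 = 0" using pairing_low_degree[OF inj, of 1 1 m] m by simp
  ultimately have "2 * a * b * pairing \<theta> m ?ti ?tk = 0" unfolding pairing_expand3 by algebra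
  then show ?thesis using two ab by simp
qed

text \<open>Comparing \<open>\<langle>A P_i, A P_k\<rangle>_m = d_k \<theta>k^m Z_i(\<theta>k) + d_i \<theta>i^m Z_k(\<theta>i)\<close> for \<open>m = 0, 1\<close>
  shows that the linear part \<open>Z_i\<close> vanishes at every other root.\<close>
lemma image_Pj_linear_part_root:
  assumes i: "i \<in> I6" and k: "k \<in> I6" and ik: "i \<noteq> k"
    and Zi: "degree Zi \<le> 1" "act M (Pj \<theta> i) = Zi + smult di (Pj \<theta> i)"
    and Zk: "degree Zk \<le> 1" "dk \<noteq> 0" "act M (Pj \<theta> k) = Zk + smult dk (Pj \<theta> k)"
  shows "poly Zi (\<theta> k) = 0"
proof -
  have eq: "dk * \<theta> k ^ m * poly Zi (\<theta> k) + di * \<theta> i ^ m * poly Zk (\<theta> i) = 0" if m: "m < 3" for m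
  proof -
    have "pairing \<theta> m Zi Zk = 0" using pairing_low_degree[OF inj] Zi(1) Zk(1) m by simp
    moreover have "pairing \<theta> m (Pj \<theta> i) (Pj \<theta> k) = 0"
      using pairing_Pj[OF inj k] poly_Pj_other[OF k ik[symmetric], of \<theta>] by simp
    moreover have "pairing \<theta> m (Pj \<theta> i) Zk = \<theta> i ^ m * poly Zk (\<theta> i)"
      using pairing_Pj[OF inj i] by (simp add: pairing_commute)
    ultimately have "pairing \<theta> m (act M (Pj \<theta> i)) (act M (Pj \<theta> k))
        = dk * \<theta> k ^ m * poly Zi (\<theta> k) + di * \<theta> i ^ m * poly Zk (\<theta> i)"
      by (simp add: Zi(2) Zk(3) pairing_bilinear pairing_Pj[OF inj k] algebra_simps)
    then show ?thesis using image_Pj_orthogonal[OF i k ik m] by simp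
  qed
  have "dk * poly Zi (\<theta> k) + di * poly Zk (\<theta> i) = 0" using eq[of 0] by simp
  moreover have "dk * \<theta> k * poly Zi (\<theta> k) + di * \<theta> i * poly Zk (\<theta> i) = 0" using eq[of 1] by simp
  ultimately have "(\<theta> k - \<theta> i) * (dk * poly Zi (\<theta> k)) = 0" by algebra
  moreover have "\<theta> k \<noteq> \<theta> i" using inj i k ik by (auto dest: inj_onD)
  ultimately show ?thesis using Zk(2) by simp
qed

lemma image_Pj_eigen:
  assumes i: "i \<in> I6" shows "\<exists>d. act M (Pj \<theta> i) = smult d (Pj \<theta> i)"
proof -
  obtain Zi di where Zi: "degree Zi \<le> 1" "act M (Pj \<theta> i) = Zi + smult di (Pj \<theta> i)"
    using image_Pj_decomposition[OF i] by metis
  have "poly Zi x = poly 0 x" if "x \<in> \<theta> ` (I6 - {i})" for x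
  proof -
    obtain k where k: "k \<in> I6" "k \<noteq> i" "x = \<theta> k" using \<open>x \<in> \<theta> ` (I6 - {i})\<close> by blast
    obtain Zk dk where "degree Zk \<le> 1" "dk \<noteq> 0" "act M (Pj \<theta> k) = Zk + smult dk (Pj \<theta> k)"
      using image_Pj_decomposition[OF k(1)] by metis
    then show ?thesis using image_Pj_linear_part_root[OF i k(1) k(2)[symmetric] Zi] k(3) by simp
  qed
  moreover have "card (\<theta> ` (I6 - {i})) = 5"
    using inj i by (subst card_image) (auto intro: inj_on_subset)
  ultimately have "Zi = 0" using Zi(1) by (intro poly_eqI_degree[of "\<theta> ` (I6 - {i})"]) auto
  then show ?thesis using Zi(2) by auto
qed

text \<open>All eigenvalues equal \<open>lm\<close>, as \<open>A(1) = lm\<close> and \<open>1 = \<Sum> P_j/\<omega>j\<close>; so \<open>A\<close> is the scalar \<open>lm\<close>.\<close>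
lemma act_scalar:
  assumes dG: "degree G \<le> 5" shows "act M G = smult lm G"
proof -
  obtain d where d: "\<And>j. j \<in> I6 \<Longrightarrow> act M (Pj \<theta> j) = smult (d j) (Pj \<theta> j)"
    using image_Pj_eigen by metis
  have act_interp: "act M (interp \<theta> y) = interp \<theta> (\<lambda>j. d j * y j)" for y
    unfolding interp_def act_sum by (intro sum.cong refl) (simp add: act_smult d ac_simps)
  have "interp \<theta> (\<lambda>j. d j * 1) = smult lm 1"
    using act_interp[of "\<lambda>_. 1"] interp_poly[OF inj, of 1] scalar[of 1] by simp
  then have dj: "d j = lm" if "j \<in> I6" for j
    using poly_interp[OF inj that, of "\<lambda>j. d j * 1"] by simp
  have "act M G = interp \<theta> (\<lambda>j. d j * poly G (\<theta> j))"
    using act_interp interp_poly[OF inj dG] by metis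
  also have "\<dots> = interp \<theta> (\<lambda>j. poly (smult lm G) (\<theta> j))"
    unfolding interp_def by (intro sum.cong refl) (simp add: dj)
  also have "\<dots> = smult lm G" using interp_poly[OF inj, of "smult lm G"] dG by simp
  finally show ?thesis .
qed

lemma in_Inv_if_scalar_on_lines: "in_Inv \<theta> M"
  unfolding in_Inv_def
proof (intro exI[of _ "\<lambda>_. 1"] conjI ballI)
  fix p assume "p \<in> Scone \<theta>"
  then have "p \<in> vec6" by (simp add: Scone_iff[OF inj])
  then have "Ppoly (mapply M p) = smult lm (Ppoly p)"
    by (simp add: Ppoly_mapply act_scalar degree_Ppoly)
  then show "\<exists>c. c \<noteq> 0 \<and> (\<forall>j\<in>I6. piC \<theta> j (mapply M p) = c * 1 * piC \<theta> j p)"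
    using lm by (intro exI[of _ lm]) (simp add: piC_def)
qed simp

end

text \<open>Unless \<open>A \<in> Inv(\<S>)\<close>, at most two \<open>p_i\<close> are fixed: they are roots of the quadratic
  \<open>A(X) - X A(1)\<close>, which vanishes identically only if \<open>A\<close> is a scalar on \<open>\<Delta>_0\<close>.\<close>
lemma few_fixed_roots:
  assumes notInv: "\<not> in_Inv \<theta> M"
  shows "card {i \<in> I6. maps_to M (\<theta> i) (\<theta> i)} \<le> 2"
proof -
  define q where "q = act M [:0, 1:] - pCons 0 (act M [:1:])"
  have q_root: "poly q (\<theta> i) = 0" if "maps_to M (\<theta> i) (\<theta> i)" for i
    using maps_to_equation[OF that] by (simp add: q_def)
  have "q \<noteq> 0"
  proof
    assume "q = 0"
    then have B: "act M [:0, 1:] = pCons 0 (act M [:1:])" by (simp add: q_def)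
    have nz: "act M [:1:] \<noteq> 0" using act_injective[of "[:1:]"] by auto
    have "degree (pCons 0 (act M [:1:])) \<le> 1" using act_line[of "[:0, 1:]"] B by simp
    then have "degree (act M [:1:]) = 0" using degree_pCons_eq[OF nz, of 0] by simp
    then obtain a where a: "act M [:1:] = [:a:]" by (blast elim: degree_eq_zeroE)
    then have "a \<noteq> 0" using nz by simp
    have "act M U = smult a U" if dU: "degree U \<le> 1" for U
    proof -
      obtain u0 u1 where "U = [:u0, u1:]" using linear_poly_eq[OF dU] by blast
      then show ?thesis using act_linear[of M u0 u1] a B by simp
    qed
    then show False using in_Inv_if_scalar_on_lines[OF \<open>a \<noteq> 0\<close>] notInv by blast
  qed
  have "degree q \<le> 2"
    unfolding q_def using act_line[of "[:0, 1:]"] act_line[of "[:1:]"] degree_pCons_le[of 0 "act M [:1:]"]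
    by (intro degree_diff_le) auto
  have "card (\<theta> ` {i \<in> I6. maps_to M (\<theta> i) (\<theta> i)}) \<le> card {x. poly q x = 0}"
    using q_root \<open>q \<noteq> 0\<close> by (intro card_mono poly_roots_finite) auto
  also have "\<dots> \<le> 2" using card_poly_roots_bound[OF \<open>q \<noteq> 0\<close>] \<open>degree q \<le> 2\<close> by simp
  finally have "card (\<theta> ` {i \<in> I6. maps_to M (\<theta> i) (\<theta> i)}) \<le> 2" .
  moreover have "inj_on \<theta> {i \<in> I6. maps_to M (\<theta> i) (\<theta> i)}" using inj by (rule inj_on_subset) auto
  ultimately show ?thesis by (simp add: card_image)
qed

definition partner :: "(nat \<Rightarrow> 'b::field) \<Rightarrow> (nat \<Rightarrow> nat \<Rightarrow> 'b) \<Rightarrow> nat \<Rightarrow> nat" where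
  "partner \<theta>' M' i = (THE k. k \<in> I6 \<and> maps_to M' (\<theta>' i) (\<theta>' k))"

lemma partner_iff:
  assumes i: "i \<in> I6" and k: "k \<in> I6"
  shows "partner \<theta> M i = k \<longleftrightarrow> maps_to M (\<theta> i) (\<theta> k)"
proof -
  obtain k0 where k0: "k0 \<in> I6" "maps_to M (\<theta> i) (\<theta> k0)" using maps_to_some_root[OF i] by blast
  have uniq: "k' = k0" if "k' \<in> I6" "maps_to M (\<theta> i) (\<theta> k')" for k'
    using maps_to_unique[OF that(2) k0(2)] inj that(1) k0(1) by (auto dest: inj_onD)
  have "partner \<theta> M i = k0" unfolding partner_def by (rule the_equality) (use k0 uniq in blast)+
  then show ?thesis using k0 uniq k by blast
qed

lemma partner_in: "i \<in> I6 \<Longrightarrow> partner \<theta> M i \<in> I6 \<and> maps_to M (\<theta> i) (\<theta> (partner \<theta> M i))"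
  using maps_to_some_root partner_iff by blast

lemma partner_partner: "i \<in> I6 \<Longrightarrow> partner \<theta> M (partner \<theta> M i) = i"
  using partner_in partner_iff maps_to_sym by blast

lemma numbering_exists:
  assumes "\<not> in_Inv \<theta> M"
  shows "\<exists>\<sigma>. \<sigma> permutes I6 \<and> maps_to M (\<theta> (\<sigma> 3)) (\<theta> (\<sigma> 4)) \<and> maps_to M (\<theta> (\<sigma> 5)) (\<theta> (\<sigma> 6))"
proof -
  have "{i \<in> I6. partner \<theta> M i = i} = {i \<in> I6. maps_to M (\<theta> i) (\<theta> i)}"
    using partner_iff by blast
  then obtain \<sigma> where \<sigma>: "\<sigma> permutes I6" "partner \<theta> M (\<sigma> 3) = \<sigma> 4" "partner \<theta> M (\<sigma> 5) = \<sigma> 6"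
    using involution_numbering[of "partner \<theta> M"] partner_in partner_partner few_fixed_roots[OF assms]
    by auto
  moreover have in6: "\<sigma> n \<in> I6" if "n \<in> I6" for n using \<sigma>(1) that by (simp only: permutes_in_image)
  ultimately show ?thesis using partner_iff[of "\<sigma> 3" "\<sigma> 4"] partner_iff[of "\<sigma> 5" "\<sigma> 6"] by auto
qed

text \<open>If \<open>A\<close> swaps two points \<open>p_p \<noteq> p_q\<close>, then every pair \<open>A(p_x) = p_y\<close> lies on a symmetric
  curve \<open>b0 - a0 (x + y) - a1 x y = 0\<close>: the relation \<open>b0 + b1 y = x (a0 + a1 y)\<close> of
  \<open>maps_to_equation\<close>, applied to \<open>(p, q)\<close> and \<open>(q, p)\<close>, forces \<open>b1 = -a0\<close>.\<close>
lemma swap_curve: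
  assumes pq: "maps_to M p q" and ne: "p \<noteq> q"
  obtains a0 a1 b0 where "a0 \<noteq> 0 \<or> a1 \<noteq> 0"
    and "\<And>x y. maps_to M x y \<Longrightarrow> b0 - a0 * (x + y) - a1 * (x * y) = 0"
proof -
  obtain a0 a1 where A: "act M [:1:] = [:a0, a1:]"
    using linear_poly_eq[OF act_line[of "[:1:]"]] by auto
  obtain b0 b1 where B: "act M [:0, 1:] = [:b0, b1:]"
    using linear_poly_eq[OF act_line[of "[:0, 1:]"]] by auto
  have eq: "b0 + b1 * y = x * (a0 + a1 * y)" if "maps_to M x y" for x y
    using maps_to_equation[OF that] by (simp add: A B algebra_simps)
  have "(q - p) * (b1 + a0) = 0" using eq[OF pq] eq[OF maps_to_sym[OF pq]] by algebra
  then have b1: "b1 = - a0" using ne by (simp add: eq_neg_iff_add_eq_0)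
  have "a0 \<noteq> 0 \<or> a1 \<noteq> 0" using act_injective[of "[:1:]"] A by auto
  moreover have "b0 - a0 * (x + y) - a1 * (x * y) = 0" if "maps_to M x y" for x y
    using eq[OF that] by (simp add: b1 algebra_simps)
  ultimately show ?thesis using that by blast
qed

lemma roots_distinct: "i \<in> I6 \<Longrightarrow> j \<in> I6 \<Longrightarrow> i \<noteq> j \<Longrightarrow> \<theta> i \<noteq> \<theta> j"
  using inj by (auto dest: inj_onD)

lemma root_pairs_curve:
  assumes R34: "maps_to M (\<theta> 3) (\<theta> 4)" and R56: "maps_to M (\<theta> 5) (\<theta> 6)"
    and sp: "\<theta> 3 + \<theta> 4 = \<theta> 5 + \<theta> 6 \<or> \<theta> 3 * \<theta> 4 = \<theta> 5 * \<theta> 6"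
  shows "(\<theta> 3 + \<theta> 4 = \<theta> 5 + \<theta> 6 \<and> (\<forall>x y. maps_to M x y \<longrightarrow> x + y = \<theta> 3 + \<theta> 4)) \<or>
    (\<theta> 3 * \<theta> 4 = \<theta> 5 * \<theta> 6 \<and> \<theta> 3 * \<theta> 4 \<noteq> 0 \<and> (\<forall>x y. maps_to M x y \<longrightarrow> x * y = \<theta> 3 * \<theta> 4))"
proof -
  obtain a0 a1 b0 where nz: "a0 \<noteq> 0 \<or> a1 \<noteq> 0"
    and E: "\<And>x y. maps_to M x y \<Longrightarrow> b0 - a0 * (x + y) - a1 * (x * y) = 0"
    using swap_curve[OF R34 roots_distinct] by auto
  have "\<theta> 5 \<noteq> \<theta> 3" "\<theta> 5 \<noteq> \<theta> 4" "\<theta> 6 \<noteq> \<theta> 3" "\<theta> 6 \<noteq> \<theta> 4" by (simp_all add: roots_distinct)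
  from symmetric_curve_shape[OF nz E[OF R34] E[OF R56] this sp] show ?thesis using E by blast
qed

lemma partner_outside_cycle:
  assumes "a \<in> I6" "partner \<theta> M a = b" "j \<in> I6" "j \<noteq> a" "j \<noteq> b"
  shows "partner \<theta> M j \<noteq> a" "partner \<theta> M j \<noteq> b"
  using assms partner_partner partner_in by metis+

lemma swapped_case:
  assumes "maps_to M (\<theta> 3) (\<theta> 4)" "maps_to M (\<theta> 5) (\<theta> 6)"
    and "\<theta> 3 + \<theta> 4 = \<theta> 5 + \<theta> 6 \<or> \<theta> 3 * \<theta> 4 = \<theta> 5 * \<theta> 6"
    and "maps_to M (\<theta> 1) (\<theta> 2)"
  shows "(\<theta> 1 + \<theta> 2 = \<theta> 3 + \<theta> 4 \<and> \<theta> 3 + \<theta> 4 = \<theta> 5 + \<theta> 6) \<or>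
         (\<theta> 1 * \<theta> 2 = \<theta> 3 * \<theta> 4 \<and> \<theta> 3 * \<theta> 4 = \<theta> 5 * \<theta> 6)"
  using root_pairs_curve[OF assms(1-3)] assms(4) by auto

text \<open>Case (b): otherwise \<open>p_1\<close>, \<open>p_2\<close> are fixed, since \<open>3, 4, 5, 6\<close> are paired among
  themselves; a sum-curve has no two distinct fixed points, so the curve is \<open>x y = \<theta>3 \<theta>4\<close>
  and \<open>\<theta>1^2 = \<theta>2^2 = \<theta>3 \<theta>4\<close>.\<close>
lemma fixed_case:
  assumes R34: "maps_to M (\<theta> 3) (\<theta> 4)" and R56: "maps_to M (\<theta> 5) (\<theta> 6)"
    and sp: "\<theta> 3 + \<theta> 4 = \<theta> 5 + \<theta> 6 \<or> \<theta> 3 * \<theta> 4 = \<theta> 5 * \<theta> 6"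
    and not12: "\<not> maps_to M (\<theta> 1) (\<theta> 2)"
  shows "maps_to M (\<theta> 1) (\<theta> 1) \<and> maps_to M (\<theta> 2) (\<theta> 2) \<and> \<theta> 1 + \<theta> 2 = 0 \<and>
         \<theta> 1 ^ 2 = \<theta> 2 ^ 2 \<and> \<theta> 2 ^ 2 = \<theta> 3 * \<theta> 4 \<and> \<theta> 3 * \<theta> 4 = \<theta> 5 * \<theta> 6"
proof -
  have p34: "partner \<theta> M 3 = 4" and p56: "partner \<theta> M 5 = 6" using R34 R56 by (simp_all add: partner_iff)
  have outside: "partner \<theta> M j \<in> {1, 2}" if "j \<in> {1, 2}" for j
    using partner_in[of j] partner_outside_cycle[OF _ p34, of j] partner_outside_cycle[OF _ p56, of j] that
    by auto
  have "partner \<theta> M 1 = 1" using outside[of 1] not12 partner_iff[of 1 2] by auto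
  moreover have "partner \<theta> M 2 = 2" using outside[of 2] partner_partner[of 2] \<open>partner \<theta> M 1 = 1\<close> by auto
  ultimately have R11: "maps_to M (\<theta> 1) (\<theta> 1)" and R22: "maps_to M (\<theta> 2) (\<theta> 2)"
    by (simp_all add: partner_iff[symmetric])
  have d12: "\<theta> 1 \<noteq> \<theta> 2" by (simp add: roots_distinct)
  from root_pairs_curve[OF R34 R56 sp] show ?thesis
  proof (elim disjE conjE)
    assume curve: "\<forall>x y. maps_to M x y \<longrightarrow> x + y = \<theta> 3 + \<theta> 4"
    have "\<theta> 1 + \<theta> 1 = \<theta> 2 + \<theta> 2" using curve[rule_format, OF R11] curve[rule_format, OF R22] by simp
    then have "2 * (\<theta> 1 - \<theta> 2) = 0" by algebra
    then show ?thesis using two d12 by simp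
  next
    assume prod: "\<theta> 3 * \<theta> 4 = \<theta> 5 * \<theta> 6" and curve: "\<forall>x y. maps_to M x y \<longrightarrow> x * y = \<theta> 3 * \<theta> 4"
    then have sq: "\<theta> 1 ^ 2 = \<theta> 3 * \<theta> 4" "\<theta> 2 ^ 2 = \<theta> 3 * \<theta> 4"
      using R11 R22 by (simp_all add: power2_eq_square)
    then have "(\<theta> 1 - \<theta> 2) * (\<theta> 1 + \<theta> 2) = 0" by algebra
    then show ?thesis using d12 sq prod R11 R22 by simp
  qed
qed

end

theorem mainTheorem13:
  fixes F :: "'a::field poly" and \<theta> :: "nat \<Rightarrow> 'a" and M :: "nat \<Rightarrow> nat \<Rightarrow> 'a"
  assumes alg_closed: "\<And>q :: 'a poly. degree q > 0 \<Longrightarrow> \<exists>x. poly q x = 0"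
    and char: "(2::'a) \<noteq> 0"
    and degF: "degree F = 6"
    and roots: "F = smult (lead_coeff F) (\<Prod>i\<in>{1..6}. [:- \<theta> i, 1:])"
    and distinct: "inj_on \<theta> {1..6}"
    and GL0: "inGL0 \<theta> M"
    and invol: "involutive_on_S \<theta> M"
    and notInv: "\<not> in_Inv \<theta> M"
  shows "(\<exists>\<sigma>. \<sigma> permutes {1..6} \<and>
            peq (mapply M (ppt \<theta> (\<sigma> 3))) (ppt \<theta> (\<sigma> 4)) \<and>
            peq (mapply M (ppt \<theta> (\<sigma> 5))) (ppt \<theta> (\<sigma> 6)))
      \<and> ((peq (mapply M (ppt \<theta> 3)) (ppt \<theta> 4) \<and>
           peq (mapply M (ppt \<theta> 5)) (ppt \<theta> 6) \<and>
           (\<theta> 3 + \<theta> 4 = \<theta> 5 + \<theta> 6 \<or> \<theta> 3 * \<theta> 4 = \<theta> 5 * \<theta> 6))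
          \<longrightarrow>
          (peq (mapply M (ppt \<theta> 1)) (ppt \<theta> 2) \<longrightarrow>
             (\<theta> 1 + \<theta> 2 = \<theta> 3 + \<theta> 4 \<and> \<theta> 3 + \<theta> 4 = \<theta> 5 + \<theta> 6) \<or>
             (\<theta> 1 * \<theta> 2 = \<theta> 3 * \<theta> 4 \<and> \<theta> 3 * \<theta> 4 = \<theta> 5 * \<theta> 6))
          \<and>
          (\<not> peq (mapply M (ppt \<theta> 1)) (ppt \<theta> 2) \<longrightarrow>
             peq (mapply M (ppt \<theta> 1)) (ppt \<theta> 1) \<and>
             peq (mapply M (ppt \<theta> 2)) (ppt \<theta> 2) \<and>
             \<theta> 1 + \<theta> 2 = 0 \<and>
             \<theta> 1 ^ 2 = \<theta> 2 ^ 2 \<and> \<theta> 2 ^ 2 = \<theta> 3 * \<theta> 4 \<and>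
             \<theta> 3 * \<theta> 4 = \<theta> 5 * \<theta> 6))"
  unfolding peq_ppt_iff
  using numbering_exists[OF distinct char GL0 invol notInv]
    swapped_case[OF distinct char GL0 invol] fixed_case[OF distinct char GL0 invol]
  by blast

end
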